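(* Consider a $K$-armed bandit ($K\ge2$) with reward vector $r\in[0,1]^K$ having distinct entries, and let $\pi^*$ be the one-hot policy on the optimal arm. For any temperature $\eta\in(0,\infty)$, the discrete DG update $\theta_{t+1}(a)=\theta_t(a)+\alpha\,w_t(a)U_t(a)$ with sufficiently small step size $\alpha>0$ yields policies $\pi_{\theta_t}$ converging to $\pi^*$.
   Context: Softmax policy $\pi_\theta(a)=e^{\theta(a)}/\sum_{a'}e^{\theta(a')}$; $\pi_t=\pi_{\theta_t}$. $U_t(a):=r(a)-\pi_t^\top r$, $\ell_t(a):=-\log\pi_t(a)$, and $w_t(a):=\sigma(U_t(a)\ell_t(a)/\eta)$ with $\sigma(x)=1/(1+e^{-x})$. Equivalently $\pi_{t+1}(a)=\pi_t(a)e^{\alpha w_t(a)U_t(a)}/\sum_{a'}\pi_t(a')e^{\alpha w_t(a')U_t(a')}$. *)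

theory Defs
  imports Complex_Main
begin

text \<open>Arms are the elements of a finite type 'a (K = CARD('a)).\<close>

definition softmax :: "('a::finite \<Rightarrow> real) \<Rightarrow> 'a \<Rightarrow> real" where
  "softmax \<theta> a = exp (\<theta> a) / (\<Sum>b\<in>UNIV. exp (\<theta> b))"

definition sigmoid :: "real \<Rightarrow> real" where
  "sigmoid x = 1 / (1 + exp (- x))"

definition adv :: "('a::finite \<Rightarrow> real) \<Rightarrow> ('a \<Rightarrow> real) \<Rightarrow> 'a \<Rightarrow> real" where
  "adv r \<theta> a = r a - (\<Sum>b\<in>UNIV. softmax \<theta> b * r b)"

definition surprisal :: "('a::finite \<Rightarrow> real) \<Rightarrow> 'a \<Rightarrow> real" where
  "surprisal \<theta> a = - ln (softmax \<theta> a)"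

definition gate :: "real \<Rightarrow> ('a::finite \<Rightarrow> real) \<Rightarrow> ('a \<Rightarrow> real) \<Rightarrow> 'a \<Rightarrow> real" where
  "gate \<eta> r \<theta> a = sigmoid (adv r \<theta> a * surprisal \<theta> a / \<eta>)"

definition dg_step :: "real \<Rightarrow> real \<Rightarrow> ('a::finite \<Rightarrow> real) \<Rightarrow> ('a \<Rightarrow> real) \<Rightarrow> 'a \<Rightarrow> real" where
  "dg_step \<alpha> \<eta> r \<theta> = (\<lambda>a. \<theta> a + \<alpha> * gate \<eta> r \<theta> a * adv r \<theta> a)"

definition dg_seq :: "real \<Rightarrow> real \<Rightarrow> ('a::finite \<Rightarrow> real) \<Rightarrow> ('a \<Rightarrow> real) \<Rightarrow> nat \<Rightarrow> 'a \<Rightarrow> real" where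
  "dg_seq \<alpha> \<eta> r \<theta>0 t = (dg_step \<alpha> \<eta> r ^^ t) \<theta>0"

text \<open>One-hot policy on the optimal arm (unique when the rewards are distinct).\<close>
definition opt_policy :: "('a \<Rightarrow> real) \<Rightarrow> 'a \<Rightarrow> real" where
  "opt_policy r a = (if (\<forall>b. r b \<le> r a) then 1 else 0)"

end

theory Submission
  imports Defs "HOL-Real_Asymp.Real_Asymp"
begin

text \<open>
  A DG step moves every logit in the direction of the sign of its advantage. For such moves the
  change of the expected reward J = \<Sum> \<pi>(b) r(b) is a sum of nonnegative terms
  \<pi>(b) (r(b) - J) (exp h(b) - 1) divided by a normaliser, so J increases along the iteration,
  for every step size, and converges to some L. The term of an arm with r(b) > L bounds
  \<pi>(b) by a multiple of the increments of J, so such arms lose all their mass. If L were below the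
  best reward, every arm with r(b) \<le> L would eventually fall behind an arm with reward above L
  by a linearly growing logit gap, because the gate is at least 1/2 on nonnegative advantages;
  then all the mass would vanish. Hence L is the best reward, which forces the mass onto the
  optimal arm.
\<close>

definition expected_reward :: "('a::finite \<Rightarrow> real) \<Rightarrow> ('a \<Rightarrow> real) \<Rightarrow> real" where
  "expected_reward r \<theta> = (\<Sum>b\<in>UNIV. softmax \<theta> b * r b)"

lemma adv_eq_reward_minus_expected: "adv r \<theta> a = r a - expected_reward r \<theta>"
  by (simp add: adv_def expected_reward_def)

lemma softmax_pos: "0 < softmax \<theta> a"
  unfolding softmax_def by (intro divide_pos_pos) (auto intro: sum_pos)

lemma sum_softmax: "(\<Sum>a\<in>UNIV. softmax \<theta> a) = 1"
proof -
  have "(\<Sum>b\<in>UNIV. exp (\<theta> b)) > 0" by (auto intro: sum_pos)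
  then show ?thesis unfolding softmax_def by (simp add: sum_divide_distrib[symmetric])
qed

lemma softmax_le_1: "softmax \<theta> a \<le> 1"
proof -
  have "softmax \<theta> a \<le> (\<Sum>a\<in>UNIV. softmax \<theta> a)"
    by (rule member_le_sum) (auto intro: less_imp_le[OF softmax_pos])
  then show ?thesis by (simp add: sum_softmax)
qed

lemma softmax_eq_mult_exp_diff: "softmax \<theta> a = softmax \<theta> b * exp (\<theta> a - \<theta> b)"
  unfolding softmax_def by (simp add: exp_diff)

lemma softmax_add:
  "softmax (\<lambda>a. \<theta> a + h a) a = softmax \<theta> a * exp (h a) / (\<Sum>b\<in>UNIV. softmax \<theta> b * exp (h b))"
proof -
  define S where "S = (\<Sum>b\<in>UNIV. exp (\<theta> b))"
  have "S > 0" unfolding S_def by (auto intro: sum_pos)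
  moreover have "(\<Sum>b\<in>UNIV. softmax \<theta> b * exp (h b)) = (\<Sum>b\<in>UNIV. exp (\<theta> b + h b)) / S"
    unfolding softmax_def S_def[symmetric] by (simp add: sum_divide_distrib exp_add)
  ultimately show ?thesis unfolding softmax_def S_def[symmetric] by (simp add: exp_add)
qed

lemma sum_softmax_mult_diff: "(\<Sum>b\<in>UNIV. softmax \<theta> b * (r b - c)) = expected_reward r \<theta> - c"
  by (simp add: right_diff_distrib sum_subtractf expected_reward_def
      sum_distrib_right[symmetric] sum_softmax)

lemma expected_reward_le: "(\<And>b. r b \<le> M) \<Longrightarrow> expected_reward r \<theta> \<le> M"
  using sum_nonpos[of UNIV "\<lambda>b. softmax \<theta> b * (r b - M)"]
  by (simp add: sum_softmax_mult_diff mult_nonneg_nonpos less_imp_le[OF softmax_pos])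

lemma expected_reward_ge: "(\<And>b. M \<le> r b) \<Longrightarrow> M \<le> expected_reward r \<theta>"
  using sum_nonneg[of UNIV "\<lambda>b. softmax \<theta> b * (r b - M)"]
  by (simp add: sum_softmax_mult_diff less_imp_le[OF softmax_pos])

lemma expected_reward_add_diff:
  "expected_reward r (\<lambda>a. \<theta> a + h a) - expected_reward r \<theta> =
     (\<Sum>b\<in>UNIV. softmax \<theta> b * (r b - expected_reward r \<theta>) * (exp (h b) - 1))
       / (\<Sum>b\<in>UNIV. softmax \<theta> b * exp (h b))"
proof -
  define J where "J = expected_reward r \<theta>"
  define Z where "Z = (\<Sum>b\<in>UNIV. softmax \<theta> b * exp (h b))"
  have "expected_reward r (\<lambda>a. \<theta> a + h a) - J = (\<Sum>b\<in>UNIV. softmax (\<lambda>a. \<theta> a + h a) b * (r b - J))"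
    by (simp add: sum_softmax_mult_diff)
  also have "\<dots> = (\<Sum>b\<in>UNIV. softmax \<theta> b * exp (h b) * (r b - J)) / Z"
    unfolding softmax_add Z_def[symmetric] by (simp add: sum_divide_distrib)
  also have "(\<Sum>b\<in>UNIV. softmax \<theta> b * exp (h b) * (r b - J)) =
      (\<Sum>b\<in>UNIV. softmax \<theta> b * (r b - J) * (exp (h b) - 1)) + (\<Sum>b\<in>UNIV. softmax \<theta> b * (r b - J))"
    by (simp add: sum.distrib[symmetric] algebra_simps)
  also have "(\<Sum>b\<in>UNIV. softmax \<theta> b * (r b - J)) = 0"
    by (simp add: sum_softmax_mult_diff J_def)
  finally show ?thesis by (simp add: J_def Z_def)
qed

lemma mult_exp_minus_one_nonneg:
  fixes x y :: real
  assumes "0 \<le> x * y"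
  shows "0 \<le> x * (exp y - 1)"
proof (cases "0 \<le> y")
  case True
  then show ?thesis using assms by (cases "y = 0") (auto simp: zero_le_mult_iff)
next
  case False
  then show ?thesis using assms by (auto simp: zero_le_mult_iff)
qed

lemma expected_reward_add_mono:
  assumes "\<And>b. 0 \<le> (r b - expected_reward r \<theta>) * h b"
  shows "expected_reward r \<theta> \<le> expected_reward r (\<lambda>a. \<theta> a + h a)"
proof -
  have "0 \<le> (\<Sum>b\<in>UNIV. softmax \<theta> b * (r b - expected_reward r \<theta>) * (exp (h b) - 1))"
    by (intro sum_nonneg)
      (simp add: mult.assoc mult_nonneg_nonneg less_imp_le[OF softmax_pos] mult_exp_minus_one_nonneg assms)
  moreover have "0 < (\<Sum>b\<in>UNIV. softmax \<theta> b * exp (h b))"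
    by (intro sum_pos) (auto intro: mult_pos_pos softmax_pos)
  ultimately have "0 \<le> expected_reward r (\<lambda>a. \<theta> a + h a) - expected_reward r \<theta>"
    unfolding expected_reward_add_diff by simp
  then show ?thesis by simp
qed

lemma expected_reward_add_gain:
  assumes sign: "\<And>b. 0 \<le> (r b - expected_reward r \<theta>) * h b"
    and bound: "\<And>b. h b \<le> c"
    and above: "expected_reward r \<theta> \<le> r a"
  shows "softmax \<theta> a * (r a - expected_reward r \<theta>) * h a / exp c
           \<le> expected_reward r (\<lambda>a. \<theta> a + h a) - expected_reward r \<theta>"
proof -
  define J where "J = expected_reward r \<theta>"
  define T where "T b = softmax \<theta> b * (r b - J) * (exp (h b) - 1)" for b
  define Z where "Z = (\<Sum>b\<in>UNIV. softmax \<theta> b * exp (h b))"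
  have T_nonneg: "0 \<le> T b" for b
    unfolding T_def J_def
    by (simp add: mult.assoc mult_nonneg_nonneg less_imp_le[OF softmax_pos] mult_exp_minus_one_nonneg sign)
  have "h a \<le> exp (h a) - 1"
    using exp_ge_add_one_self[of "h a"] by linarith
  then have "softmax \<theta> a * (r a - J) * h a \<le> T a"
    unfolding T_def using above softmax_pos[of \<theta> a]
    by (auto simp: J_def intro!: mult_left_mono)
  also have "T a \<le> (\<Sum>b\<in>UNIV. T b)"
    by (rule member_le_sum) (auto intro: T_nonneg)
  finally have gain: "softmax \<theta> a * (r a - J) * h a \<le> (\<Sum>b\<in>UNIV. T b)" .
  have "0 < Z"
    unfolding Z_def by (intro sum_pos) (auto intro: mult_pos_pos softmax_pos)
  moreover have "Z \<le> (\<Sum>b\<in>UNIV. softmax \<theta> b * exp c)"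
    unfolding Z_def by (intro sum_mono mult_left_mono) (auto intro: less_imp_le[OF softmax_pos] bound)
  then have "Z \<le> exp c"
    by (simp add: sum_distrib_right[symmetric] sum_softmax)
  moreover have "0 \<le> softmax \<theta> a * (r a - J) * h a"
    using sign[of a] softmax_pos[of \<theta> a] by (simp add: J_def mult.assoc)
  ultimately have "softmax \<theta> a * (r a - J) * h a / exp c \<le> (\<Sum>b\<in>UNIV. T b) / Z"
    using gain by (intro frac_le) auto
  then show ?thesis
    unfolding expected_reward_add_diff by (simp add: T_def Z_def J_def)
qed

lemma sigmoid_pos: "0 < sigmoid x"
  unfolding sigmoid_def by (simp add: add_pos_pos)

lemma sigmoid_less_1: "sigmoid x < 1"
  unfolding sigmoid_def by (simp add: add_pos_pos)

lemma sigmoid_ge_half: "0 \<le> x \<Longrightarrow> 1/2 \<le> sigmoid x"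
  unfolding sigmoid_def by (simp add: field_simps add_pos_pos)

lemma surprisal_nonneg: "0 \<le> surprisal \<theta> a"
  unfolding surprisal_def using softmax_pos[of \<theta> a] softmax_le_1[of \<theta> a] by simp

lemma gate_pos: "0 < gate \<eta> r \<theta> a"
  unfolding gate_def by (rule sigmoid_pos)

lemma gate_less_1: "gate \<eta> r \<theta> a < 1"
  unfolding gate_def by (rule sigmoid_less_1)

lemma gate_ge_half: "0 < \<eta> \<Longrightarrow> 0 \<le> adv r \<theta> a \<Longrightarrow> 1/2 \<le> gate \<eta> r \<theta> a"
  unfolding gate_def by (intro sigmoid_ge_half divide_nonneg_pos mult_nonneg_nonneg surprisal_nonneg)

lemma gate_mult_le_max: "gate \<eta> r \<theta> a * x \<le> max 0 x"
  using gate_pos[of \<eta> r \<theta> a] gate_less_1[of \<eta> r \<theta> a]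
  by (cases "0 \<le> x") (auto intro: mult_left_le_one_le mult_nonneg_nonpos)

lemma adv_le_1:
  assumes "\<And>b. 0 \<le> r b \<and> r b \<le> 1"
  shows "adv r \<theta> a \<le> 1"
proof -
  have "0 \<le> expected_reward r \<theta>"
    using assms by (intro expected_reward_ge) auto
  then show ?thesis
    using assms[of a] by (simp add: adv_eq_reward_minus_expected)
qed

lemma dg_seq_Suc: "dg_seq \<alpha> \<eta> r \<theta>0 (Suc t) = dg_step \<alpha> \<eta> r (dg_seq \<alpha> \<eta> r \<theta>0 t)"
  by (simp add: dg_seq_def)

lemma adv_mult_dg_increment_nonneg:
  assumes "0 \<le> \<alpha>"
  shows "0 \<le> (r b - expected_reward r \<theta>) * (\<alpha> * gate \<eta> r \<theta> b * adv r \<theta> b)"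
proof -
  have square: "(r b - expected_reward r \<theta>) * (\<alpha> * gate \<eta> r \<theta> b * adv r \<theta> b)
      = \<alpha> * gate \<eta> r \<theta> b * (adv r \<theta> b)\<^sup>2"
    by (simp add: adv_eq_reward_minus_expected power2_eq_square)
  show ?thesis
    unfolding square using assms gate_pos[of \<eta> r \<theta> b] by simp
qed

lemma dg_step_expected_reward_mono:
  "0 \<le> \<alpha> \<Longrightarrow> expected_reward r \<theta> \<le> expected_reward r (dg_step \<alpha> \<eta> r \<theta>)"
  unfolding dg_step_def by (intro expected_reward_add_mono adv_mult_dg_increment_nonneg)

lemma dg_step_expected_reward_gain:
  assumes rewards: "\<And>b. 0 \<le> r b \<and> r b \<le> 1" and "0 < \<eta>" "0 < \<alpha>"
    and adv_nonneg: "0 \<le> adv r \<theta> a"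
  shows "softmax \<theta> a * \<alpha> * (adv r \<theta> a)\<^sup>2 / (2 * exp \<alpha>)
           \<le> expected_reward r (dg_step \<alpha> \<eta> r \<theta>) - expected_reward r \<theta>"
proof -
  define U where "U = adv r \<theta> a"
  define h where "h b = \<alpha> * gate \<eta> r \<theta> b * adv r \<theta> b" for b
  have sign: "0 \<le> (r b - expected_reward r \<theta>) * h b" for b
    unfolding h_def using \<open>0 < \<alpha>\<close> by (simp add: adv_mult_dg_increment_nonneg)
  have h_le: "h b \<le> \<alpha>" for b
  proof -
    have "adv r \<theta> b \<le> 1"
      using rewards by (rule adv_le_1)
    then have "gate \<eta> r \<theta> b * adv r \<theta> b \<le> 1"
      using gate_mult_le_max[of \<eta> r \<theta> b "adv r \<theta> b"] by linarith
    then show ?thesis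
      unfolding h_def using \<open>0 < \<alpha>\<close> mult_left_mono[of _ 1 \<alpha>] by (simp add: mult.assoc)
  qed
  have "expected_reward r \<theta> \<le> r a"
    using adv_nonneg by (simp add: adv_eq_reward_minus_expected)
  from expected_reward_add_gain[OF sign h_le this]
  have gain: "softmax \<theta> a * U * h a / exp \<alpha>
      \<le> expected_reward r (dg_step \<alpha> \<eta> r \<theta>) - expected_reward r \<theta>"
    by (simp add: U_def dg_step_def h_def adv_eq_reward_minus_expected)
  have "1/2 \<le> gate \<eta> r \<theta> a"
    using \<open>0 < \<eta>\<close> adv_nonneg by (rule gate_ge_half)
  moreover have "0 \<le> softmax \<theta> a * \<alpha> * U\<^sup>2"
    using softmax_pos[of \<theta> a] \<open>0 < \<alpha>\<close> by simp
  ultimately have "softmax \<theta> a * \<alpha> * U\<^sup>2 * (1/2) \<le> softmax \<theta> a * \<alpha> * U\<^sup>2 * gate \<eta> r \<theta> a"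
    by (rule mult_left_mono)
  then have "softmax \<theta> a * \<alpha> * U\<^sup>2 / 2 \<le> softmax \<theta> a * U * h a"
    by (simp add: h_def U_def power2_eq_square algebra_simps)
  then have "softmax \<theta> a * \<alpha> * U\<^sup>2 / (2 * exp \<alpha>) \<le> softmax \<theta> a * U * h a / exp \<alpha>"
    by (simp add: divide_right_mono flip: divide_divide_eq_left)
  with gain show ?thesis
    by (simp add: U_def)
qed

lemma dg_step_logit_gap_increase:
  assumes "0 < \<eta>" "0 \<le> \<alpha>" "0 \<le> \<delta>"
    and "\<delta> \<le> adv r \<theta> c" "adv r \<theta> b \<le> \<delta> / 4"
  shows "\<theta> c - \<theta> b + \<alpha> * \<delta> / 4 \<le> dg_step \<alpha> \<eta> r \<theta> c - dg_step \<alpha> \<eta> r \<theta> b"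
proof -
  define g where "g a = gate \<eta> r \<theta> a * adv r \<theta> a" for a
  have "1/2 \<le> gate \<eta> r \<theta> c"
    using assms by (intro gate_ge_half) auto
  then have "1/2 * adv r \<theta> c \<le> g c"
    unfolding g_def using assms by (intro mult_right_mono) auto
  moreover have "g b \<le> \<delta> / 4"
    unfolding g_def using gate_mult_le_max[of \<eta> r \<theta> b "adv r \<theta> b"] assms by linarith
  ultimately have "\<alpha> * (\<delta> / 4) \<le> \<alpha> * (g c - g b)"
    using assms by (intro mult_left_mono) auto
  then show ?thesis
    by (simp add: dg_step_def g_def algebra_simps)
qed

lemma filterlim_at_top_if_increments_ge:
  fixes D :: "nat \<Rightarrow> real"
  assumes "0 < c" and increment: "\<And>n. N \<le> n \<Longrightarrow> D n + c \<le> D (Suc n)"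
  shows "filterlim D at_top sequentially"
proof -
  have linear_bound: "D N + (real n - real N) * c \<le> D n" if "N \<le> n" for n
    using that
  proof (induction rule: dec_induct)
    case base
    then show ?case by simp
  next
    case (step n)
    then show ?case using increment[of n] by (simp add: algebra_simps)
  qed
  have "filterlim (\<lambda>n. D N + (real n - real N) * c) at_top sequentially"
    using \<open>0 < c\<close> by real_asymp
  then show ?thesis
    by (rule filterlim_at_top_mono) (auto simp: eventually_sequentially intro: linear_bound)
qed

lemma softmax_tendsto_0_if_expected_reward_tendsto_max:
  assumes lim: "(\<lambda>t. expected_reward r (\<theta> t)) \<longlonglongrightarrow> r m"
    and max: "\<And>c. r c \<le> r m" and "r b < r m"
  shows "(\<lambda>t. softmax (\<theta> t) b) \<longlonglongrightarrow> 0"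
proof -
  have bound: "softmax (\<theta> t) b \<le> (r m - expected_reward r (\<theta> t)) / (r m - r b)" for t
  proof -
    have "softmax (\<theta> t) b * (r m - r b) \<le> (\<Sum>c\<in>UNIV. softmax (\<theta> t) c * (r m - r c))"
      by (rule member_le_sum) (auto intro!: mult_nonneg_nonneg less_imp_le[OF softmax_pos] simp: max)
    also have "\<dots> = - (\<Sum>c\<in>UNIV. softmax (\<theta> t) c * (r c - r m))"
      by (simp add: sum_negf[symmetric] algebra_simps)
    also have "\<dots> = r m - expected_reward r (\<theta> t)"
      by (simp add: sum_softmax_mult_diff)
    finally show ?thesis
      using \<open>r b < r m\<close> by (simp add: pos_le_divide_eq)
  qed
  have "(\<lambda>t. (r m - expected_reward r (\<theta> t)) / (r m - r b)) \<longlonglongrightarrow> (r m - r m) / (r m - r b)"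
    using \<open>r b < r m\<close> by (intro tendsto_intros lim) auto
  then have "(\<lambda>t. (r m - expected_reward r (\<theta> t)) / (r m - r b)) \<longlonglongrightarrow> 0"
    by simp
  then show ?thesis
    by (rule tendsto_sandwich[OF _ _ tendsto_const, rotated 2])
      (auto intro!: always_eventually less_imp_le[OF softmax_pos] bound)
qed

lemma softmax_tendsto_1_if_others_tendsto_0:
  assumes "\<And>b. b \<noteq> m \<Longrightarrow> (\<lambda>t. softmax (\<theta> t) b) \<longlonglongrightarrow> 0"
  shows "(\<lambda>t. softmax (\<theta> t) m) \<longlonglongrightarrow> 1"
proof -
  have eq: "softmax (\<theta> t) m = 1 - (\<Sum>b\<in>UNIV - {m}. softmax (\<theta> t) b)" for t
    using sum_softmax[of "\<theta> t"] sum.remove[of UNIV m "softmax (\<theta> t)"] by simp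
  have "(\<lambda>t. 1 - (\<Sum>b\<in>UNIV - {m}. softmax (\<theta> t) b)) \<longlonglongrightarrow> 1 - (\<Sum>b\<in>UNIV - {m}. 0)"
    by (intro tendsto_intros assms) auto
  then show ?thesis
    unfolding eq by simp
qed

lemma obtain_strict_argmax:
  fixes r :: "'a::finite \<Rightarrow> 'b::linorder"
  assumes "inj r"
  obtains m where "\<And>b. b \<noteq> m \<Longrightarrow> r b < r m"
proof -
  have "Max (range r) \<in> range r"
    by (rule Max_in) auto
  then obtain m where m: "r m = Max (range r)"
    by (metis imageE)
  have "r b < r m" if "b \<noteq> m" for b
  proof -
    have "r b \<le> r m"
      unfolding m by (rule Max_ge) auto
    moreover have "r b \<noteq> r m"
      using inj_eq[OF assms, of b m] that by simp
    ultimately show ?thesis by simp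
  qed
  then show ?thesis by (rule that)
qed

lemma opt_policy_strict_argmax:
  assumes "\<And>b. b \<noteq> m \<Longrightarrow> r b < r m"
  shows "opt_policy r a = (if a = m then 1 else 0)"
proof (cases "a = m")
  case True
  then show ?thesis
    using assms by (metis less_imp_le order_refl opt_policy_def)
next
  case False
  then show ?thesis
    using assms[OF False] by (auto simp: opt_policy_def not_le intro: exI[of _ m])
qed


context
  fixes r :: "'a::finite \<Rightarrow> real" and \<eta> \<alpha> :: real and \<theta>0 :: "'a \<Rightarrow> real"
  assumes rewards: "\<And>a. 0 \<le> r a \<and> r a \<le> 1" and eta_pos: "0 < \<eta>" and alpha_pos: "0 < \<alpha>"
begin

lemma incseq_expected_reward_dg_seq: "incseq (\<lambda>t. expected_reward r (dg_seq \<alpha> \<eta> r \<theta>0 t))"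
  by (rule incseq_SucI) (simp add: dg_seq_Suc dg_step_expected_reward_mono alpha_pos less_imp_le)

lemma expected_reward_dg_seq_convergent:
  obtains L where "(\<lambda>t. expected_reward r (dg_seq \<alpha> \<eta> r \<theta>0 t)) \<longlonglongrightarrow> L"
proof -
  have "expected_reward r (dg_seq \<alpha> \<eta> r \<theta>0 t) \<le> 1" for t
    using rewards by (intro expected_reward_le) auto
  then show ?thesis
    using incseq_convergent[OF incseq_expected_reward_dg_seq] that by blast
qed

lemma softmax_dg_seq_tendsto_0_above_limit:
  assumes lim: "(\<lambda>t. expected_reward r (dg_seq \<alpha> \<eta> r \<theta>0 t)) \<longlonglongrightarrow> L" and "L < r b"
  shows "(\<lambda>t. softmax (dg_seq \<alpha> \<eta> r \<theta>0 t) b) \<longlonglongrightarrow> 0"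
proof -
  define \<theta> where "\<theta> = dg_seq \<alpha> \<eta> r \<theta>0"
  define J where "J t = expected_reward r (\<theta> t)" for t
  define K where "K = \<alpha> * (r b - L)\<^sup>2 / (2 * exp \<alpha>)"
  have "0 < K"
    unfolding K_def using alpha_pos \<open>L < r b\<close> by simp
  have bound: "softmax (\<theta> t) b \<le> (J (Suc t) - J t) / K" for t
  proof -
    have "J t \<le> L"
      unfolding J_def \<theta>_def using incseq_expected_reward_dg_seq lim by (rule incseq_le)
    then have "r b - L \<le> adv r (\<theta> t) b"
      by (simp add: adv_eq_reward_minus_expected J_def)
    then have "0 \<le> adv r (\<theta> t) b"
      using \<open>L < r b\<close> by linarith
    have "(r b - L)\<^sup>2 \<le> (adv r (\<theta> t) b)\<^sup>2"
      using \<open>r b - L \<le> adv r (\<theta> t) b\<close> \<open>L < r b\<close> by (intro power_mono) auto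
    then have "K \<le> \<alpha> * (adv r (\<theta> t) b)\<^sup>2 / (2 * exp \<alpha>)"
      unfolding K_def using alpha_pos by (intro divide_right_mono mult_left_mono) auto
    then have "softmax (\<theta> t) b * K \<le> softmax (\<theta> t) b * (\<alpha> * (adv r (\<theta> t) b)\<^sup>2 / (2 * exp \<alpha>))"
      by (rule mult_left_mono) (use softmax_pos[of "\<theta> t" b] in simp)
    then have "softmax (\<theta> t) b * K \<le> softmax (\<theta> t) b * \<alpha> * (adv r (\<theta> t) b)\<^sup>2 / (2 * exp \<alpha>)"
      by (simp add: mult.assoc)
    also have "\<dots> \<le> J (Suc t) - J t"
      using dg_step_expected_reward_gain[OF rewards eta_pos alpha_pos \<open>0 \<le> adv r (\<theta> t) b\<close>]
      by (simp add: J_def \<theta>_def dg_seq_Suc)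
    finally show ?thesis
      using \<open>0 < K\<close> by (simp add: pos_le_divide_eq)
  qed
  have "J \<longlonglongrightarrow> L"
    using lim by (simp add: J_def[abs_def] \<theta>_def)
  then have "(\<lambda>t. (J (Suc t) - J t) / K) \<longlonglongrightarrow> (L - L) / K"
    using \<open>0 < K\<close> by (intro tendsto_divide tendsto_diff[OF LIMSEQ_Suc]) auto
  then have "(\<lambda>t. (J (Suc t) - J t) / K) \<longlonglongrightarrow> 0"
    by simp
  then show ?thesis
    unfolding \<theta>_def[symmetric]
    by (rule tendsto_sandwich[OF _ _ tendsto_const, rotated 2])
      (auto intro!: always_eventually less_imp_le[OF softmax_pos] bound)
qed

lemma softmax_dg_seq_tendsto_0_below_limit:
  assumes lim: "(\<lambda>t. expected_reward r (dg_seq \<alpha> \<eta> r \<theta>0 t)) \<longlonglongrightarrow> L"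
    and "L < r c" "r b \<le> L"
  shows "(\<lambda>t. softmax (dg_seq \<alpha> \<eta> r \<theta>0 t) b) \<longlonglongrightarrow> 0"
proof -
  define \<theta> where "\<theta> = dg_seq \<alpha> \<eta> r \<theta>0"
  define J where "J t = expected_reward r (\<theta> t)" for t
  define \<delta> where "\<delta> = r c - L"
  define D where "D t = \<theta> t c - \<theta> t b" for t
  have "0 < \<delta>"
    unfolding \<delta>_def using \<open>L < r c\<close> by simp
  have "\<forall>\<^sub>F t in sequentially. dist (J t) L < \<delta> / 4"
    unfolding J_def \<theta>_def using lim \<open>0 < \<delta>\<close> by (intro tendstoD) auto
  then obtain N where N: "\<And>t. N \<le> t \<Longrightarrow> dist (J t) L < \<delta> / 4"
    unfolding eventually_sequentially by blast
  have "D t + \<alpha> * \<delta> / 4 \<le> D (Suc t)" if "N \<le> t" for t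
  proof -
    have "J t \<le> L"
      unfolding J_def \<theta>_def using incseq_expected_reward_dg_seq lim by (rule incseq_le)
    then have "\<delta> \<le> adv r (\<theta> t) c" and "adv r (\<theta> t) b \<le> \<delta> / 4"
      using N[OF that] \<open>r b \<le> L\<close>
      by (auto simp: adv_eq_reward_minus_expected J_def \<delta>_def dist_real_def)
    then show ?thesis
      using dg_step_logit_gap_increase[OF eta_pos less_imp_le[OF alpha_pos] less_imp_le[OF \<open>0 < \<delta>\<close>]]
      by (simp add: D_def \<theta>_def dg_seq_Suc)
  qed
  then have "filterlim D at_top sequentially"
    using alpha_pos \<open>0 < \<delta>\<close> by (intro filterlim_at_top_if_increments_ge[of "\<alpha> * \<delta> / 4"]) auto
  then have "filterlim (\<lambda>t. - D t) at_bot sequentially"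
    by (simp add: filterlim_uminus_at_top)
  then have exp_lim: "(\<lambda>t. exp (- D t)) \<longlonglongrightarrow> 0"
    by (rule filterlim_compose[OF exp_at_bot])
  have bound: "softmax (\<theta> t) b \<le> exp (- D t)" for t
    using softmax_eq_mult_exp_diff[of "\<theta> t" b c] softmax_le_1[of "\<theta> t" c]
      mult_right_mono[of "softmax (\<theta> t) c" 1 "exp (\<theta> t b - \<theta> t c)"]
    by (simp add: D_def)
  show ?thesis
    unfolding \<theta>_def[symmetric]
    by (rule tendsto_sandwich[OF _ _ tendsto_const exp_lim])
      (auto intro!: always_eventually less_imp_le[OF softmax_pos] bound)
qed

lemma expected_reward_dg_seq_limit_ge:
  assumes lim: "(\<lambda>t. expected_reward r (dg_seq \<alpha> \<eta> r \<theta>0 t)) \<longlonglongrightarrow> L"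
  shows "r c \<le> L"
proof (rule ccontr)
  assume "\<not> r c \<le> L"
  then have "L < r c" by simp
  then have all_vanish: "(\<lambda>t. softmax (dg_seq \<alpha> \<eta> r \<theta>0 t) b) \<longlonglongrightarrow> 0" for b
    using softmax_dg_seq_tendsto_0_above_limit[OF lim] softmax_dg_seq_tendsto_0_below_limit[OF lim]
    by (cases "L < r b") (auto simp: not_less)
  have "(\<lambda>t. \<Sum>b\<in>UNIV. softmax (dg_seq \<alpha> \<eta> r \<theta>0 t) b) \<longlonglongrightarrow> (\<Sum>b\<in>(UNIV::'a set). 0)"
    by (intro tendsto_sum all_vanish)
  then show False
    by (simp add: sum_softmax LIMSEQ_const_iff)
qed

lemma softmax_dg_seq_tendsto_opt_policy:
  assumes "inj r"
  shows "(\<lambda>t. softmax (dg_seq \<alpha> \<eta> r \<theta>0 t) a) \<longlonglongrightarrow> opt_policy r a"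
proof -
  obtain m where m: "\<And>b. b \<noteq> m \<Longrightarrow> r b < r m"
    using obtain_strict_argmax[OF assms] by blast
  then have max: "r b \<le> r m" for b
    by (cases "b = m") (auto intro: less_imp_le)
  obtain L where lim: "(\<lambda>t. expected_reward r (dg_seq \<alpha> \<eta> r \<theta>0 t)) \<longlonglongrightarrow> L"
    by (rule expected_reward_dg_seq_convergent)
  have "L \<le> r m"
    using lim by (rule LIMSEQ_le_const2) (auto intro: expected_reward_le max)
  with expected_reward_dg_seq_limit_ge[OF lim, of m] lim
  have "(\<lambda>t. expected_reward r (dg_seq \<alpha> \<eta> r \<theta>0 t)) \<longlonglongrightarrow> r m"
    by simp
  then have others: "(\<lambda>t. softmax (dg_seq \<alpha> \<eta> r \<theta>0 t) b) \<longlonglongrightarrow> 0" if "b \<noteq> m" for b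
    using max m[OF that] by (rule softmax_tendsto_0_if_expected_reward_tendsto_max)
  show ?thesis
    using others softmax_tendsto_1_if_others_tendsto_0[OF others]
    by (simp add: opt_policy_strict_argmax[of m r, OF m])
qed

end

theorem theorem7:
  fixes r :: "'a::finite \<Rightarrow> real" and \<eta> :: real and \<theta>0 :: "'a \<Rightarrow> real"
  assumes "card (UNIV :: 'a set) \<ge> 2"
    and "\<And>a. 0 \<le> r a \<and> r a \<le> 1"
    and "inj r"
    and "0 < \<eta>"
  shows "\<exists>\<alpha>0>0. \<forall>\<alpha>. 0 < \<alpha> \<and> \<alpha> \<le> \<alpha>0 \<longrightarrow>
           (\<forall>a. (\<lambda>t. softmax (dg_seq \<alpha> \<eta> r \<theta>0 t) a) \<longlonglongrightarrow> opt_policy r a)"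
  \<comment> \<open>Convergence holds for every step size, so any \<open>\<alpha>0\<close> works.\<close>
  using softmax_dg_seq_tendsto_opt_policy[OF assms(2,4) _ assms(3)] by (intro exI[of _ 1]) auto

end
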